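(* Let $0<S<T$, let $\tilde\beta:[0,T]\to\mathbb{R}^d$, $\tilde B:[0,T]\to\mathbb{R}^{d\times d}$, $\tilde\sigma:[0,T]\to\mathbb{R}^{d\times d'}$ be continuous, $\tilde a=\tilde\sigma\tilde\sigma'$, $L_S\in\mathbb{R}^{m_S\times d}$, $L_T\in\mathbb{R}^{m_T\times d}$, and let $\Sigma_S,\Sigma_T$ be symmetric positive definite matrices of sizes $m_S$, $m_T$. With $\tilde L$, $\Upsilon$ as in the context, assume that for every $t\in[0,T]$ the matrix $\tilde M(t)=\big(\int_t^T\tilde L(\tau)\tilde a(\tau)\tilde L(\tau)'\,\mathrm d\tau+\Upsilon(t)\big)^{-1}$ exists and that the null space of $\tilde L(t)$ is $\{0\}$. Let $\tilde H(t)=\tilde L(t)'\tilde M(t)\tilde L(t)$ and $\tilde H^\dagger(t)=\tilde H(t)^{-1}$. Then for $t\in(S,T]$, $$\frac{\mathrm d\tilde H^\dagger(t)}{\mathrm dt}=\tilde B(t)\tilde H^\dagger(t)+\tilde H^\dagger(t)\tilde B(t)'-\tilde a(t),\qquad \tilde H^\dagger(T)=\big(L_T'\Sigma_T^{-1}L_T\big)^{-1}.$$ On $[0,S]$ the same differential equation holds, and $\tilde H^\dagger(S)$ is obtained from the right limit $\tilde H^\dagger(S+)$ by $$\tilde H^\dagger(S)=\tilde H^\dagger(S+)-\tilde H^\dagger(S+)L_S'\big(\Sigma_S+L_S\tilde H^\dagger(S+)L_S'\big)^{-1}L_S\tilde H^\dagger(S+).$$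
   Context: Let $\Phi$ solve $\mathrm d\Phi(t)=\tilde B(t)\Phi(t)\,\mathrm dt$, $\Phi(0)=I$, and $\Phi(t,s)=\Phi(t)\Phi(s)^{-1}$. Define $\tilde L(t)=\begin{bmatrix}L_S\Phi(S,t)\mathbf 1_{[0,S]}(t)\\ L_T\Phi(T,t)\end{bmatrix}$ for $t\in[0,S]$ and $\tilde L(t)=L_T\Phi(T,t)$ for $t\in(S,T]$; $\Upsilon(t)=\operatorname{diag}(\Sigma_S,\Sigma_T)$ for $t\in[0,S]$ and $\Upsilon(t)=\Sigma_T$ for $t\in(S,T]$. For $t\in[0,S]$, in the integral defining $\tilde M(t)$ the integrand $\tilde L(\tau)$ means the $(m_S+m_T)\times d$ matrix $\begin{bmatrix}L_S\Phi(S,\tau)\mathbf 1_{[0,S]}(\tau)\\ L_T\Phi(T,\tau)\end{bmatrix}$ for all $\tau\in[t,T]$. $f(S+)$ denotes the right limit at $S$. *)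

theory Defs
  imports "HOL-Analysis.Analysis"
begin

definition trans_mat :: "(real \<Rightarrow> real^'d^'d) \<Rightarrow> real \<Rightarrow> real \<Rightarrow> real^'d^'d" where
  "trans_mat Phi t s = Phi t ** matrix_inv (Phi s)"

definition Ltil_stack ::
  "real^'d^'mS \<Rightarrow> real^'d^'mT \<Rightarrow> (real \<Rightarrow> real^'d^'d) \<Rightarrow> real \<Rightarrow> real \<Rightarrow> real
     \<Rightarrow> real^'d^('mS + 'mT)" where
  "Ltil_stack LmS LmT Phi S T tau =
     (\<chi> i. case i of
        Inl j \<Rightarrow> (if 0 \<le> tau \<and> tau \<le> S then (LmS ** trans_mat Phi S tau) $ j else 0)
      | Inr j \<Rightarrow> (LmT ** trans_mat Phi T tau) $ j)"

definition Ltil_last ::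
  "real^'d^'mT \<Rightarrow> (real \<Rightarrow> real^'d^'d) \<Rightarrow> real \<Rightarrow> real \<Rightarrow> real^'d^'mT" where
  "Ltil_last LmT Phi T tau = LmT ** trans_mat Phi T tau"

definition Ups_stack ::
  "real^'mS^'mS \<Rightarrow> real^'mT^'mT \<Rightarrow> real^('mS + 'mT)^('mS + 'mT)" where
  "Ups_stack SigS SigT =
     (\<chi> i k. case (i, k) of
        (Inl a, Inl b) \<Rightarrow> SigS $ a $ b
      | (Inr a, Inr b) \<Rightarrow> SigT $ a $ b
      | _ \<Rightarrow> 0)"

definition Minv_stack where
  "Minv_stack LmS LmT Phi a SigS SigT S T t =
     integral {t..T} (\<lambda>tau. Ltil_stack LmS LmT Phi S T tau ** a tau ** transpose (Ltil_stack LmS LmT Phi S T tau))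
     + Ups_stack SigS SigT"

definition Minv_last where
  "Minv_last LmT Phi a SigT T t =
     integral {t..T} (\<lambda>tau. Ltil_last LmT Phi T tau ** a tau ** transpose (Ltil_last LmT Phi T tau))
     + SigT"

definition Htil ::
  "real^'d^'mS \<Rightarrow> real^'d^'mT \<Rightarrow> (real \<Rightarrow> real^'d^'d) \<Rightarrow> (real \<Rightarrow> real^'d^'d)
    \<Rightarrow> real^'mS^'mS \<Rightarrow> real^'mT^'mT \<Rightarrow> real \<Rightarrow> real \<Rightarrow> real \<Rightarrow> real^'d^'d" where
  "Htil LmS LmT Phi a SigS SigT S T t =
     (if t \<le> S then
        transpose (Ltil_stack LmS LmT Phi S T t) ** matrix_inv (Minv_stack LmS LmT Phi a SigS SigT S T t)
          ** Ltil_stack LmS LmT Phi S T t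
      else
        transpose (Ltil_last LmT Phi T t) ** matrix_inv (Minv_last LmT Phi a SigT T t)
          ** Ltil_last LmT Phi T t)"

definition sym_posdef :: "real^'n^'n \<Rightarrow> bool" where
  "sym_posdef A \<longleftrightarrow> transpose A = A \<and> (\<forall>x. x \<noteq> 0 \<longrightarrow> x \<bullet> (A *v x) > 0)"

end

theory Submission
  imports Defs
begin

(* On each of the intervals (S, T] and [0, S] the matrix Htil(t) has the form L(t)' N(t)^-1 L(t),
   where L(t) = L0 Phi(t)^-1 satisfies L' = -L B and N(t) = Ups + integral_t^T L a L' satisfies
   N' = -L a L'. Differentiating the two inverses gives H' = -H B - B' H + H a H, which for
   Hdag = H^-1 is the stated Riccati equation. N and H are positive definite (the Sigma's are,
   L a L' = (L sigma)(L sigma)' is semidefinite, and L is injective), so every inverse exists. At t = S the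
   stacked L(S) and block diagonal N(S) split H(S) = L_S' Sigma_S^-1 L_S + H(S+), and the
   Woodbury identity turns this into the update formula. Phi(t) is invertible because
   exp(2KCt) |Phi(t) x|^2 is nondecreasing, so Phi(t) x = 0 forces x = Phi(0) x = 0. *)

section \<open>Matrix calculus\<close>

lemma bilinear_matrix_mult: "bilinear (\<lambda>(A::real^'n^'m) (B::real^'p^'n). A ** B)"
  unfolding bilinear_def
  by (auto intro!: linearI
      simp: vec_eq_iff matrix_matrix_mult_def sum.distrib sum_distrib_left algebra_simps)

lemma bounded_bilinear_matrix_mult: "bounded_bilinear (\<lambda>(A::real^'n^'m) (B::real^'p^'n). A ** B)"
  using bilinear_conv_bounded_bilinear bilinear_matrix_mult by blast

lemma bounded_bilinear_matrix_vector_mult: "bounded_bilinear (\<lambda>(A::real^'n^'m) (x::real^'n). A *v x)"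
  unfolding bilinear_conv_bounded_bilinear[symmetric] bilinear_def
  by (auto intro!: linearI
      simp: vec_eq_iff matrix_vector_mult_def sum.distrib sum_distrib_left algebra_simps)

lemmas matrix_mult_linear_simps =
  bounded_bilinear.add_left[OF bounded_bilinear_matrix_mult]
  bounded_bilinear.add_right[OF bounded_bilinear_matrix_mult]
  bounded_bilinear.diff_left[OF bounded_bilinear_matrix_mult]
  bounded_bilinear.diff_right[OF bounded_bilinear_matrix_mult]
  bounded_bilinear.minus_left[OF bounded_bilinear_matrix_mult]
  bounded_bilinear.minus_right[OF bounded_bilinear_matrix_mult]
  bounded_bilinear.scaleR_left[OF bounded_bilinear_matrix_mult]
  bounded_bilinear.scaleR_right[OF bounded_bilinear_matrix_mult]
  bounded_bilinear.zero_left[OF bounded_bilinear_matrix_mult]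
  bounded_bilinear.zero_right[OF bounded_bilinear_matrix_mult]

lemma bounded_linear_transpose: "bounded_linear (transpose :: real^'n^'m \<Rightarrow> real^'m^'n)"
  unfolding linear_conv_bounded_linear[symmetric]
  by (rule linearI) (simp_all add: vec_eq_iff transpose_def)

lemma transpose_uminus: "transpose (- A) = - transpose (A::real^'n^'m)"
  by (simp add: vec_eq_iff transpose_def)

lemma inner_transpose_matrix_vector: "x \<bullet> (transpose L *v y) = (L *v x) \<bullet> (y::real^'m)"
  by (metis dot_lmul_matrix inner_commute transpose_matrix_vector)

lemma matrix_inv_left: "invertible (A::real^'n^'n) \<Longrightarrow> matrix_inv A ** A = mat 1"
  unfolding invertible_def matrix_inv_def by (rule someI2_ex) auto

lemma matrix_inv_right: "invertible (A::real^'n^'n) \<Longrightarrow> A ** matrix_inv A = mat 1"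
  unfolding invertible_def matrix_inv_def by (rule someI2_ex) auto

lemma matrix_inv_unique:
  assumes "(A::real^'n^'n) ** B = mat 1"
  shows "matrix_inv A = B"
proof -
  have "invertible A"
    using assms invertible_right_inverse by blast
  then have "matrix_inv A = (matrix_inv A ** A) ** B"
    by (simp add: assms matrix_mul_assoc[symmetric])
  then show ?thesis
    by (simp add: matrix_inv_left \<open>invertible A\<close>)
qed

lemma invertible_matrix_inv: "invertible (A::real^'n^'n) \<Longrightarrow> invertible (matrix_inv A)"
  using matrix_inv_left invertible_right_inverse by blast

lemma matrix_inv_diff:
  assumes "invertible (P::real^'n^'n)" "invertible Q"
  shows "matrix_inv P - matrix_inv Q = matrix_inv P ** (Q - P) ** matrix_inv Q"
proof -
  have "matrix_inv P ** (Q - P) ** matrix_inv Q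
      = matrix_inv P ** (Q ** matrix_inv Q) - (matrix_inv P ** P) ** matrix_inv Q"
    by (simp add: matrix_mult_linear_simps matrix_mul_assoc)
  then show ?thesis
    using assms by (simp add: matrix_inv_left matrix_inv_right)
qed

lemma norm_matrix_inv_diff_le:
  obtains K :: real where "K > 0"
    "\<And>P Q :: real^'n^'n. invertible P \<Longrightarrow> invertible Q \<Longrightarrow>
       norm (matrix_inv P - matrix_inv Q) \<le> norm (matrix_inv P) * norm (P - Q) * norm (matrix_inv Q) * (K * K)"
proof -
  obtain K where K: "K > 0" "\<And>(A::real^'n^'n) (B::real^'n^'n). norm (A ** B) \<le> norm A * norm B * K"
    using bounded_bilinear.pos_bounded[OF bounded_bilinear_matrix_mult] by auto
  have "norm (matrix_inv P - matrix_inv Q)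
      \<le> norm (matrix_inv P) * norm (P - Q) * norm (matrix_inv Q) * (K * K)"
    if "invertible P" "invertible Q" for P Q :: "real^'n^'n"
  proof -
    have "norm (matrix_inv P - matrix_inv Q) = norm (matrix_inv P ** (Q - P) ** matrix_inv Q)"
      using that by (simp add: matrix_inv_diff)
    also have "\<dots> \<le> norm (matrix_inv P ** (Q - P)) * norm (matrix_inv Q) * K"
      by (rule K(2))
    also have "\<dots> \<le> (norm (matrix_inv P) * norm (Q - P) * K) * norm (matrix_inv Q) * K"
      using K by (intro mult_right_mono) auto
    finally show ?thesis
      by (simp add: norm_minus_commute mult_ac)
  qed
  with K(1) show ?thesis
    using that by blast
qed

lemma continuous_matrix_inv:
  fixes F :: "real \<Rightarrow> real^'n^'n"
  assumes F: "continuous (at t within X) F"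
    and inv: "\<And>s. s \<in> X \<Longrightarrow> invertible (F s)" and t: "t \<in> X"
  shows "continuous (at t within X) (\<lambda>s. matrix_inv (F s))"
proof -
  obtain K :: real where K: "\<And>P Q :: real^'n^'n. invertible P \<Longrightarrow> invertible Q \<Longrightarrow>
      norm (matrix_inv P - matrix_inv Q) \<le> norm (matrix_inv P) * norm (P - Q) * norm (matrix_inv Q) * (K * K)"
    using norm_matrix_inv_diff_le by blast
  define G where "G s = matrix_inv (F s)" for s
  define c where "c = norm (G t) * (K * K) + 1"
  have c: "c > 0"
    by (simp add: c_def add_nonneg_pos)
  have F_lim: "(F \<longlongrightarrow> F t) (at t within X)"
    using F by (simp add: continuous_within)
  have in_X: "\<forall>\<^sub>F s in at t within X. s \<in> X"
    by (simp add: eventually_at_filter)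
  have close: "\<forall>\<^sub>F s in at t within X. dist (F s) (F t) < 1 / (2 * c)"
    using tendstoD[OF F_lim] c by simp
  \<comment> \<open>Where \<open>norm (F s - F t) * c \<le> 1/2\<close>, the bound on \<open>G s - G t\<close> itself forces
    \<open>norm (G s) \<le> 2 * norm (G t)\<close>.\<close>
  have "\<forall>\<^sub>F s in at t within X. norm (G s - G t) \<le> (2 * norm (G t) * c) * norm (F s - F t)"
    using in_X close
  proof eventually_elim
    case (elim s)
    have half: "norm (F s - F t) * c \<le> 1/2"
      using elim(2) c by (simp add: dist_norm field_simps)
    have "norm (G s - G t) \<le> norm (G s) * norm (F s - F t) * (norm (G t) * (K * K))"
      using K[OF inv[OF elim(1)] inv[OF t]] by (simp add: G_def mult_ac)
    also have "\<dots> \<le> norm (G s) * norm (F s - F t) * c"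
      by (intro mult_left_mono) (auto simp: c_def)
    finally have diff: "norm (G s - G t) \<le> norm (G s) * (norm (F s - F t) * c)"
      by (simp add: mult.assoc)
    have "norm (G s) \<le> norm (G t) + norm (G s - G t)"
      by (metis add.commute diff_add_cancel norm_triangle_ineq)
    also have "\<dots> \<le> norm (G t) + norm (G s) * (1/2)"
      using diff half by (meson add_left_mono mult_left_mono norm_ge_zero order_trans)
    finally have "norm (G s) \<le> 2 * norm (G t)" by simp
    then have "norm (G s) * (norm (F s - F t) * c) \<le> 2 * norm (G t) * (norm (F s - F t) * c)"
      using c by (intro mult_right_mono) auto
    with diff show ?case by (simp add: algebra_simps)
  qed
  moreover have "((\<lambda>s. (2 * norm (G t) * c) * norm (F s - F t)) \<longlongrightarrow> 0) (at t within X)"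
    using tendsto_mult_right_zero[OF tendsto_norm_zero[OF LIM_zero[OF F_lim]]] by simp
  ultimately have "((\<lambda>s. G s - G t) \<longlongrightarrow> 0) (at t within X)"
    by (rule Lim_null_comparison)
  then show ?thesis
    unfolding continuous_within G_def[symmetric] by (rule LIM_zero_cancel)
qed

lemma has_vector_derivative_matrix_inv:
  fixes F :: "real \<Rightarrow> real^'n^'n"
  assumes F: "(F has_vector_derivative F') (at t within X)"
    and inv: "\<And>s. s \<in> X \<Longrightarrow> invertible (F s)" and t: "t \<in> X"
  shows "((\<lambda>s. matrix_inv (F s)) has_vector_derivative
           - (matrix_inv (F t) ** F' ** matrix_inv (F t))) (at t within X)"
proof -
  define G where "G s = matrix_inv (F s)" for s
  define R where "R s = (1 / norm (s - t)) *\<^sub>R (F s - (F t + (s - t) *\<^sub>R F'))" for s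
  have G_lim: "(G \<longlongrightarrow> G t) (at t within X)"
    using continuous_matrix_inv[OF has_vector_derivative_continuous[OF F] inv t]
    by (simp add: G_def[abs_def] continuous_within)
  have R_lim: "(R \<longlongrightarrow> 0) (at t within X)"
    using F unfolding has_vector_derivative_def has_derivative_within R_def by simp
  have lim1: "((\<lambda>s. G s ** R s ** G t) \<longlongrightarrow> G t ** 0 ** G t) (at t within X)"
    by (intro bounded_bilinear.tendsto[OF bounded_bilinear_matrix_mult] G_lim R_lim tendsto_const)
  have lim2: "((\<lambda>s. (G s - G t) ** F' ** G t) \<longlongrightarrow> (G t - G t) ** F' ** G t) (at t within X)"
    by (intro bounded_bilinear.tendsto[OF bounded_bilinear_matrix_mult] tendsto_intros G_lim)
  have lim2': "((\<lambda>s. ((s - t) / norm (s - t)) *\<^sub>R ((G s - G t) ** F' ** G t)) \<longlongrightarrow> 0) (at t within X)"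
  proof (rule Lim_null_comparison)
    show "\<forall>\<^sub>F s in at t within X. norm (((s - t) / norm (s - t)) *\<^sub>R ((G s - G t) ** F' ** G t))
        \<le> norm ((G s - G t) ** F' ** G t)"
      by (intro always_eventually allI) (auto simp: mult_left_le_one_le)
    show "((\<lambda>s. norm ((G s - G t) ** F' ** G t)) \<longlongrightarrow> 0) (at t within X)"
      using tendsto_norm[OF lim2] by simp
  qed
  \<comment> \<open>From \<open>G s - G t = - G s (F s - F t) G t\<close>, the remainder of \<open>G\<close> splits into that of \<open>F\<close>
    conjugated by \<open>G s, G t\<close> and a term that vanishes by continuity of \<open>G\<close>.\<close>
  have remainder: "(1 / norm (s - t)) *\<^sub>R (G s - (G t + (s - t) *\<^sub>R (- (G t ** F' ** G t))))
      = - (G s ** R s ** G t) - ((s - t) / norm (s - t)) *\<^sub>R ((G s - G t) ** F' ** G t)"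
    if s: "s \<in> X" for s
  proof -
    have "G s - G t = - (G s ** (F s - F t) ** G t)"
      using matrix_inv_diff[OF inv[OF s] inv[OF t]] unfolding G_def
      by (simp add: matrix_mult_linear_simps)
    then show ?thesis
      unfolding R_def
      by (simp add: matrix_mult_linear_simps algebra_simps diff_divide_distrib scaleR_left_diff_distrib)
        (metis scaleR_add_right)
  qed
  have "((\<lambda>s. (1 / norm (s - t)) *\<^sub>R (G s - (G t + (s - t) *\<^sub>R (- (G t ** F' ** G t)))))
      \<longlongrightarrow> 0) (at t within X)"
  proof (rule tendsto_cong[THEN iffD2])
    show "((\<lambda>s. - (G s ** R s ** G t) - ((s - t) / norm (s - t)) *\<^sub>R ((G s - G t) ** F' ** G t))
        \<longlongrightarrow> 0) (at t within X)"
      using tendsto_diff[OF tendsto_minus[OF lim1] lim2'] by simp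
    show "\<forall>\<^sub>F s in at t within X. (1 / norm (s - t)) *\<^sub>R (G s - (G t + (s - t) *\<^sub>R (- (G t ** F' ** G t))))
        = - (G s ** R s ** G t) - ((s - t) / norm (s - t)) *\<^sub>R ((G s - G t) ** F' ** G t)"
      unfolding eventually_at_filter by (intro always_eventually allI impI) (rule remainder)
  qed
  then show ?thesis
    unfolding has_vector_derivative_def has_derivative_within G_def[symmetric]
    by (auto simp: bounded_linear_scaleR_left intro!: bounded_linear_minus)
qed

section \<open>Invertibility of fundamental matrices\<close>

lemma quadratic_form_bound:
  obtains K :: real where "K > 0" "\<And>(M::real^'n^'n) x. \<bar>x \<bullet> (M *v x)\<bar> \<le> K * norm M * (x \<bullet> x)"
proof -
  obtain K where K: "K > 0" "\<And>(M::real^'n^'n) x. norm (M *v x) \<le> norm M * norm x * K"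
    using bounded_bilinear.pos_bounded[OF bounded_bilinear_matrix_vector_mult] by auto
  have "\<bar>x \<bullet> (M *v x)\<bar> \<le> K * norm M * (x \<bullet> x)" for M :: "real^'n^'n" and x
  proof -
    have "\<bar>x \<bullet> (M *v x)\<bar> \<le> norm x * norm (M *v x)"
      by (rule Cauchy_Schwarz_ineq2)
    also have "\<dots> \<le> norm x * (norm M * norm x * K)"
      by (intro mult_left_mono K(2)) simp
    also have "\<dots> = K * norm M * (x \<bullet> x)"
      by (simp add: power2_norm_eq_inner[symmetric] power2_eq_square mult_ac)
    finally show ?thesis .
  qed
  with K(1) show ?thesis
    using that by blast
qed

lemma linear_ode_zero_at_end_imp_zero_at_start:
  fixes w :: "real \<Rightarrow> real^'n" and A :: "real \<Rightarrow> real^'n^'n"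
  assumes t01: "t0 \<le> t1"
    and w: "\<And>s. s \<in> {t0..t1} \<Longrightarrow> (w has_vector_derivative (A s *v w s)) (at s within {t0..t1})"
    and A: "\<And>s. s \<in> {t0..t1} \<Longrightarrow> norm (A s) \<le> C"
    and w_t1: "w t1 = 0"
  shows "w t0 = 0"
proof -
  obtain K where K: "K > 0" "\<And>(M::real^'n^'n) x. \<bar>x \<bullet> (M *v x)\<bar> \<le> K * norm M * (x \<bullet> x)"
    using quadratic_form_bound by blast
  \<comment> \<open>The weighted energy \<open>exp (2 K C s) |w s|\<^sup>2\<close> is nondecreasing.\<close>
  define f where "f s = exp (2 * K * C * s) * (w s \<bullet> w s)" for s
  define f' where "f' s = exp (2 * K * C * s) * (w s \<bullet> (A s *v w s) + (A s *v w s) \<bullet> w s)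
      + exp (2 * K * C * s) * (2 * K * C) * (w s \<bullet> w s)" for s
  have f': "(f has_vector_derivative f' s) (at s within {t0..t1})" if s: "s \<in> {t0..t1}" for s
  proof -
    have "((\<lambda>s. w s \<bullet> w s) has_vector_derivative (w s \<bullet> (A s *v w s) + (A s *v w s) \<bullet> w s))
        (at s within {t0..t1})"
      by (rule bounded_bilinear.has_vector_derivative[OF bounded_bilinear_inner w[OF s] w[OF s]])
    moreover have "((\<lambda>s. exp (2 * K * C * s)) has_vector_derivative (exp (2 * K * C * s) * (2 * K * C)))
        (at s within {t0..t1})"
      unfolding has_real_derivative_iff_has_vector_derivative[symmetric]
      by (auto intro!: derivative_eq_intros)
    ultimately show ?thesis
      unfolding f_def[abs_def] f'_def
      by (rule bounded_bilinear.has_vector_derivative[OF bounded_bilinear_mult, rotated])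
  qed
  have f'_nonneg: "0 \<le> f' s" if s: "s \<in> {t0..t1}" for s
  proof -
    have "\<bar>w s \<bullet> (A s *v w s)\<bar> \<le> K * norm (A s) * (w s \<bullet> w s)"
      by (rule K(2))
    also have "\<dots> \<le> K * C * (w s \<bullet> w s)"
      using A[OF s] K(1) by (intro mult_right_mono) auto
    finally have "0 \<le> w s \<bullet> (A s *v w s) + (A s *v w s) \<bullet> w s + 2 * K * C * (w s \<bullet> w s)"
      by (simp add: inner_commute)
    moreover have "f' s = exp (2 * K * C * s)
        * (w s \<bullet> (A s *v w s) + (A s *v w s) \<bullet> w s + 2 * K * C * (w s \<bullet> w s))"
      unfolding f'_def by (simp add: algebra_simps)
    ultimately show ?thesis
      by simp
  qed
  have "(f' has_integral (f t1 - f t0)) {t0..t1}"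
    by (rule fundamental_theorem_of_calculus[OF t01]) (use f' in auto)
  then have "f t0 \<le> f t1"
    by (rule has_integral_nonneg[of f' "f t1 - f t0", simplified]) (use f'_nonneg in auto)
  then have "w t0 \<bullet> w t0 \<le> 0"
    using w_t1 by (simp add: f_def mult_le_0_iff)
  then show ?thesis
    by (metis inner_eq_zero_iff inner_ge_zero order_antisym)
qed

lemma fundamental_matrix_invertible:
  fixes Phi B :: "real \<Rightarrow> real^'n^'n"
  assumes B: "continuous_on {0..T} B"
    and Phi: "\<And>t. t \<in> {0..T} \<Longrightarrow> (Phi has_vector_derivative (B t ** Phi t)) (at t within {0..T})"
    and Phi_0: "Phi 0 = mat 1" and t: "t \<in> {0..T}"
  shows "invertible (Phi t)"
proof -
  obtain C where "\<forall>M \<in> B ` {0..T}. norm M \<le> C"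
    using compact_imp_bounded[OF compact_continuous_image[OF B compact_Icc]]
    unfolding bounded_iff by blast
  then have C: "\<And>s. s \<in> {0..T} \<Longrightarrow> norm (B s) \<le> C"
    by blast
  have "x = 0" if x: "Phi t *v x = 0" for x
  proof -
    have "Phi 0 *v x = 0"
    proof (rule linear_ode_zero_at_end_imp_zero_at_start[where w = "\<lambda>s. Phi s *v x" and A = B])
      show "0 \<le> t" using t by simp
      show "Phi t *v x = 0" by (rule x)
      fix s assume s: "s \<in> {0..t}"
      then show "norm (B s) \<le> C" using C t by auto
      have "s \<in> {0..T}" "{0..t} \<subseteq> {0..T}"
        using s t by auto
      then have "(Phi has_vector_derivative (B s ** Phi s)) (at s within {0..t})"
        using has_vector_derivative_within_subset Phi by blast
      from bounded_linear.has_vector_derivative[OF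
          bounded_bilinear.bounded_linear_left[OF bounded_bilinear_matrix_vector_mult] this]
      show "((\<lambda>s. Phi s *v x) has_vector_derivative (B s *v (Phi s *v x))) (at s within {0..t})"
        by (simp add: matrix_vector_mul_assoc)
    qed
    then show "x = 0" by (simp add: Phi_0)
  qed
  then have "\<exists>B'. B' ** Phi t = mat 1"
    using matrix_left_invertible_ker by blast
  then show ?thesis
    using invertible_left_inverse by blast
qed

section \<open>Positive definite matrices\<close>

definition pos_def :: "real^'n^'n \<Rightarrow> bool" where
  "pos_def A \<longleftrightarrow> (\<forall>x. x \<noteq> 0 \<longrightarrow> 0 < x \<bullet> (A *v x))"

definition pos_semidef :: "real^'n^'n \<Rightarrow> bool" where
  "pos_semidef A \<longleftrightarrow> (\<forall>x. 0 \<le> x \<bullet> (A *v x))"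

lemma sym_posdef_imp_pos_def: "sym_posdef A \<Longrightarrow> pos_def A"
  unfolding sym_posdef_def pos_def_def by blast

lemma pos_def_imp_pos_semidef: "pos_def A \<Longrightarrow> pos_semidef A"
  unfolding pos_def_def pos_semidef_def by (metis inner_zero_left less_eq_real_def)

lemma pos_def_invertible: "pos_def (A::real^'n^'n) \<Longrightarrow> invertible A"
  unfolding pos_def_def invertible_left_inverse matrix_left_invertible_ker by force

lemma pos_def_matrix_inv:
  assumes "pos_def (A::real^'n^'n)"
  shows "pos_def (matrix_inv A)"
  unfolding pos_def_def
proof (intro allI impI)
  fix z :: "real^'n" assume "z \<noteq> 0"
  define w where "w = matrix_inv A *v z"
  have z: "z = A *v w"
    using pos_def_invertible[OF assms]
    by (simp add: w_def matrix_vector_mul_assoc matrix_inv_right)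
  with \<open>z \<noteq> 0\<close> have "w \<noteq> 0"
    by auto
  then have "0 < w \<bullet> (A *v w)"
    using assms unfolding pos_def_def by blast
  moreover have "z \<bullet> (matrix_inv A *v z) = (A *v w) \<bullet> w"
    by (simp add: z [symmetric] w_def [symmetric])
  ultimately show "0 < z \<bullet> (matrix_inv A *v z)"
    by (simp add: inner_commute)
qed

lemma pos_def_add_pos_semidef: "pos_def A \<Longrightarrow> pos_semidef B \<Longrightarrow> pos_def (A + B)"
  unfolding pos_def_def pos_semidef_def
  by (simp add: matrix_vector_mult_add_rdistrib inner_add_right add_pos_nonneg)

lemma pos_def_congruence:
  assumes "pos_def (A::real^'m^'m)" and "\<And>x. (L::real^'n^'m) *v x = 0 \<Longrightarrow> x = 0"
  shows "pos_def (transpose L ** A ** L)"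
  unfolding pos_def_def
proof (intro allI impI)
  fix x :: "real^'n" assume "x \<noteq> 0"
  then have "0 < (L *v x) \<bullet> (A *v (L *v x))"
    using assms unfolding pos_def_def by blast
  then show "0 < x \<bullet> ((transpose L ** A ** L) *v x)"
    by (simp add: inner_transpose_matrix_vector flip: matrix_vector_mul_assoc
        del: transpose_matrix_vector)
qed

lemma pos_semidef_congruence:
  assumes "pos_semidef (A::real^'m^'m)"
  shows "pos_semidef (transpose (L::real^'n^'m) ** A ** L)"
  unfolding pos_semidef_def
proof
  fix x :: "real^'n"
  have "0 \<le> (L *v x) \<bullet> (A *v (L *v x))"
    using assms unfolding pos_semidef_def by blast
  then show "0 \<le> x \<bullet> ((transpose L ** A ** L) *v x)"
    by (simp add: inner_transpose_matrix_vector flip: matrix_vector_mul_assoc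
        del: transpose_matrix_vector)
qed

lemma pos_semidef_gram: "pos_semidef ((A::real^'n^'m) ** transpose A)"
  unfolding pos_semidef_def
  by (metis inner_transpose_matrix_vector inner_ge_zero matrix_vector_mul_assoc transpose_transpose)

lemma pos_semidef_integral:
  fixes g :: "real \<Rightarrow> real^'n^'n"
  assumes "g integrable_on I" and "\<And>t. t \<in> I \<Longrightarrow> pos_semidef (g t)"
  shows "pos_semidef (integral I g)"
  unfolding pos_semidef_def
proof
  fix x :: "real^'n"
  have quadratic_form: "bounded_linear (\<lambda>A::real^'n^'n. x \<bullet> (A *v x))"
    by (intro bounded_linear_compose[OF bounded_linear_inner_right]
        bounded_bilinear.bounded_linear_left[OF bounded_bilinear_matrix_vector_mult])
  have "0 \<le> integral I ((\<lambda>A. x \<bullet> (A *v x)) \<circ> g)"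
    using assms(2) unfolding pos_semidef_def
    by (intro integral_nonneg integrable_linear[OF assms(1) quadratic_form]) auto
  also have "\<dots> = x \<bullet> (integral I g *v x)"
    by (rule integral_linear[OF assms(1) quadratic_form])
  finally show "0 \<le> x \<bullet> (integral I g *v x)" .
qed

section \<open>Block matrices\<close>

definition stack_rows :: "real^'n^'a \<Rightarrow> real^'n^'b \<Rightarrow> real^'n^('a + 'b)" where
  "stack_rows A C = (\<chi> i. case i of Inl j \<Rightarrow> A $ j | Inr j \<Rightarrow> C $ j)"

lemma sum_UNIV_Plus:
  "(\<Sum>i\<in>(UNIV::('a::finite + 'b::finite) set). f i) = (\<Sum>j\<in>UNIV. f (Inl j)) + (\<Sum>j\<in>UNIV. f (Inr j))"
  by (subst UNIV_Plus_UNIV[symmetric], subst sum.Plus) (auto simp: o_def)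

lemma stack_rows_nth [simp]: "stack_rows A C $ Inl j = A $ j" "stack_rows A C $ Inr k = C $ k"
  by (simp_all add: stack_rows_def)

lemma Ups_stack_nth [simp]:
  "Ups_stack X Y $ Inl i $ Inl j = X $ i $ j" "Ups_stack X Y $ Inr k $ Inr l = Y $ k $ l"
  "Ups_stack X Y $ Inl i $ Inr l = 0" "Ups_stack X Y $ Inr k $ Inl j = 0"
  by (simp_all add: Ups_stack_def)

lemma stack_rows_mult: "stack_rows A C ** P = stack_rows (A ** P) (C ** P)"
  by (simp add: vec_eq_iff matrix_matrix_mult_def stack_rows_def split: sum.split)

lemma Ups_stack_mult_stack_rows: "Ups_stack X Y ** stack_rows A C = stack_rows (X ** A) (Y ** C)"
proof -
  have "(Ups_stack X Y ** stack_rows A C) $ i $ k = stack_rows (X ** A) (Y ** C) $ i $ k" for i k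
    by (cases i) (simp_all add: matrix_matrix_mult_def sum_UNIV_Plus)
  then show ?thesis by (simp add: vec_eq_iff)
qed

lemma transpose_stack_rows_mult:
  "transpose (stack_rows A C) ** stack_rows D E = transpose A ** D + transpose C ** E"
  by (simp add: vec_eq_iff matrix_matrix_mult_def sum_UNIV_Plus transpose_def)

lemma stack_rows_congruence:
  "transpose (stack_rows A C) ** Ups_stack X Y ** stack_rows A C
     = transpose A ** X ** A + transpose C ** Y ** C"
  by (simp add: Ups_stack_mult_stack_rows transpose_stack_rows_mult flip: matrix_mul_assoc)

lemma stack_rows_zero_congruence:
  "stack_rows 0 C ** X ** transpose (stack_rows 0 C) = Ups_stack 0 (C ** X ** transpose C)"
  unfolding vec_eq_iff
proof (intro allI)
  fix i k
  show "(stack_rows 0 C ** X ** transpose (stack_rows 0 C)) $ i $ k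
      = Ups_stack 0 (C ** X ** transpose C) $ i $ k"
    by (cases i; cases k) (simp_all add: stack_rows_mult matrix_matrix_mult_def transpose_def)
qed

lemma Ups_stack_mult: "Ups_stack X Y ** Ups_stack X' Y' = Ups_stack (X ** X') (Y ** Y')"
proof -
  have "(Ups_stack X Y ** Ups_stack X' Y') $ i $ k = Ups_stack (X ** X') (Y ** Y') $ i $ k" for i k
    by (cases i; cases k) (simp_all add: matrix_matrix_mult_def sum_UNIV_Plus)
  then show ?thesis by (simp add: vec_eq_iff)
qed

lemma Ups_stack_mat_1: "Ups_stack (mat 1) (mat 1) = mat 1"
proof -
  have "Ups_stack (mat 1) (mat 1) $ i $ k = (mat 1 :: real^('a+'b)^('a+'b)) $ i $ k" for i k
    by (cases i; cases k) (simp_all add: mat_def)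
  then show ?thesis by (simp add: vec_eq_iff)
qed

lemma Ups_stack_add: "Ups_stack X Y + Ups_stack X' Y' = Ups_stack (X + X') (Y + Y')"
proof -
  have "(Ups_stack X Y + Ups_stack X' Y') $ i $ k = Ups_stack (X + X') (Y + Y') $ i $ k" for i k
    by (cases i; cases k) simp_all
  then show ?thesis by (simp add: vec_eq_iff)
qed

lemma matrix_inv_Ups_stack:
  assumes "invertible X" "invertible Y"
  shows "matrix_inv (Ups_stack X Y) = Ups_stack (matrix_inv X) (matrix_inv Y)"
  by (rule matrix_inv_unique) (simp add: Ups_stack_mult matrix_inv_right assms Ups_stack_mat_1)

lemma bounded_linear_Ups_stack_zero: "bounded_linear (\<lambda>Y. Ups_stack (0::real^'a^'a) (Y::real^'b^'b))"
proof -
  have "Ups_stack (0::real^'a^'a) (r *\<^sub>R Y) $ i $ k = (r *\<^sub>R Ups_stack (0::real^'a^'a) Y) $ i $ k"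
    for r and Y :: "real^'b^'b" and i k
    by (cases i; cases k) simp_all
  then show ?thesis
    unfolding linear_conv_bounded_linear[symmetric]
    by (intro linearI) (simp_all add: Ups_stack_add vec_eq_iff)
qed

lemma pos_def_Ups_stack:
  assumes "pos_def X" "pos_def Y"
  shows "pos_def (Ups_stack X Y)"
  unfolding pos_def_def
proof (intro allI impI)
  fix x :: "real^('a+'b)" assume "x \<noteq> 0"
  define xl where "xl = (\<chi> j. x $ Inl j)"
  define xr where "xr = (\<chi> j. x $ Inr j)"
  have split: "x \<bullet> (Ups_stack X Y *v x) = xl \<bullet> (X *v xl) + xr \<bullet> (Y *v xr)"
    by (simp add: inner_vec_def matrix_vector_mult_def sum_UNIV_Plus xl_def xr_def)
  have "xl \<noteq> 0 \<or> xr \<noteq> 0"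
  proof (rule ccontr)
    assume "\<not> (xl \<noteq> 0 \<or> xr \<noteq> 0)"
    then have "x $ i = 0" for i
      by (cases i) (auto simp: xl_def xr_def vec_eq_iff)
    with \<open>x \<noteq> 0\<close> show False
      by (simp add: vec_eq_iff)
  qed
  moreover have "0 \<le> xl \<bullet> (X *v xl)" "0 \<le> xr \<bullet> (Y *v xr)"
    using assms pos_def_imp_pos_semidef unfolding pos_semidef_def by blast+
  ultimately show "0 < x \<bullet> (Ups_stack X Y *v x)"
    using assms unfolding split pos_def_def by (metis add_pos_nonneg add_nonneg_pos)
qed

section \<open>Information matrices\<close>

lemma woodbury_identity:
  fixes H :: "real^'d^'d" and Sg :: "real^'m^'m" and L :: "real^'d^'m"
  assumes "invertible H" "invertible Sg" "invertible (Sg + L ** matrix_inv H ** transpose L)"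
  shows "matrix_inv (transpose L ** matrix_inv Sg ** L + H)
    = matrix_inv H - matrix_inv H ** transpose L
        ** matrix_inv (Sg + L ** matrix_inv H ** transpose L) ** L ** matrix_inv H"
proof -
  define P where "P = matrix_inv H"
  define K where "K = Sg + L ** P ** transpose L"
  define Ki where "Ki = matrix_inv K"
  have HP: "H ** P = mat 1"
    using assms(1) by (simp add: P_def matrix_inv_right)
  have SS: "matrix_inv Sg ** Sg = mat 1"
    using assms(2) by (simp add: matrix_inv_left)
  have KK: "K ** Ki = mat 1"
    using assms(3) by (simp add: Ki_def K_def P_def matrix_inv_right)
  have "transpose L ** matrix_inv Sg ** (L ** P ** transpose L) ** Ki ** L ** P
      = transpose L ** (matrix_inv Sg ** (K ** Ki)) ** L ** P
        - transpose L ** (matrix_inv Sg ** Sg) ** Ki ** L ** P"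
    by (simp add: K_def matrix_mult_linear_simps matrix_mul_assoc)
  then have cross: "transpose L ** matrix_inv Sg ** (L ** P ** transpose L) ** Ki ** L ** P
      = transpose L ** matrix_inv Sg ** L ** P - transpose L ** Ki ** L ** P"
    by (simp add: KK SS)
  have "(transpose L ** matrix_inv Sg ** L + H) ** (P - P ** transpose L ** Ki ** L ** P)
      = transpose L ** matrix_inv Sg ** L ** P
        - transpose L ** matrix_inv Sg ** (L ** P ** transpose L) ** Ki ** L ** P
        + (H ** P) - (H ** P) ** transpose L ** Ki ** L ** P"
    by (simp add: matrix_mult_linear_simps matrix_mul_assoc)
  also have "\<dots> = mat 1"
    unfolding cross HP by simp
  finally show ?thesis
    unfolding P_def [symmetric] K_def [symmetric] Ki_def [symmetric] by (rule matrix_inv_unique)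
qed

lemma has_vector_derivative_information:
  fixes L :: "real \<Rightarrow> real^'d^'m" and N :: "real \<Rightarrow> real^'m^'m" and B a :: "real \<Rightarrow> real^'d^'d"
  assumes L: "(L has_vector_derivative - (L t ** B t)) (at t within X)"
    and N: "(N has_vector_derivative - (L t ** a t ** transpose (L t))) (at t within X)"
    and N_inv: "\<And>s. s \<in> X \<Longrightarrow> invertible (N s)" and t: "t \<in> X"
  defines "H \<equiv> \<lambda>s. transpose (L s) ** matrix_inv (N s) ** L s"
  shows "(H has_vector_derivative - (H t ** B t) + H t ** a t ** H t - transpose (B t) ** H t)
           (at t within X)"
proof -
  define M where "M s = matrix_inv (N s)" for s
  have M: "(M has_vector_derivative M t ** L t ** a t ** transpose (L t) ** M t) (at t within X)"
    using has_vector_derivative_matrix_inv[OF N N_inv t]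
    by (simp add: M_def[abs_def] matrix_mult_linear_simps matrix_mul_assoc)
  have L_transpose: "((\<lambda>s. transpose (L s)) has_vector_derivative - (transpose (B t) ** transpose (L t)))
      (at t within X)"
    using bounded_linear.has_vector_derivative[OF bounded_linear_transpose L]
    by (simp add: matrix_transpose_mul transpose_uminus)
  have "(H has_vector_derivative
      transpose (L t) ** M t ** - (L t ** B t)
      + (transpose (L t) ** (M t ** L t ** a t ** transpose (L t) ** M t)
         + - (transpose (B t) ** transpose (L t)) ** M t) ** L t) (at t within X)"
    unfolding H_def M_def[symmetric]
    by (intro bounded_bilinear.has_vector_derivative[OF bounded_bilinear_matrix_mult] L L_transpose M)
  then show ?thesis
    by (simp add: H_def M_def matrix_mult_linear_simps matrix_mul_assoc) (simp add: algebra_simps)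
qed

lemma riccati_conjugation:
  fixes H Hd B a :: "real^'n^'n"
  assumes "Hd ** H = mat 1" "H ** Hd = mat 1"
  shows "- (Hd ** (- (H ** B) + H ** a ** H - transpose B ** H) ** Hd) = B ** Hd + Hd ** transpose B - a"
proof -
  have "- (Hd ** (- (H ** B) + H ** a ** H - transpose B ** H) ** Hd)
      = (Hd ** H) ** (B ** Hd) - (Hd ** H) ** a ** (H ** Hd) + (Hd ** transpose B) ** (H ** Hd)"
    by (simp add: matrix_mult_linear_simps matrix_mul_assoc)
  then show ?thesis
    by (simp add: assms)
qed

lemma riccati_inverse_information:
  fixes L :: "real \<Rightarrow> real^'d^'m" and N :: "real \<Rightarrow> real^'m^'m" and B a Hd :: "real \<Rightarrow> real^'d^'d"
  assumes L: "(L has_vector_derivative - (L t ** B t)) (at t within X)"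
    and N: "(N has_vector_derivative - (L t ** a t ** transpose (L t))) (at t within X)"
    and N_pos: "\<And>s. s \<in> X \<Longrightarrow> pos_def (N s)"
    and L_inj: "\<And>s x. s \<in> X \<Longrightarrow> L s *v x = 0 \<Longrightarrow> x = 0"
    and Hd: "\<And>s. s \<in> X \<Longrightarrow> Hd s = matrix_inv (transpose (L s) ** matrix_inv (N s) ** L s)"
    and t: "t \<in> X"
  shows "(Hd has_vector_derivative (B t ** Hd t + Hd t ** transpose (B t) - a t)) (at t within X)"
proof -
  define H where "H s = transpose (L s) ** matrix_inv (N s) ** L s" for s
  have H_pos: "pos_def (H s)" if "s \<in> X" for s
    unfolding H_def using that by (intro pos_def_congruence pos_def_matrix_inv N_pos L_inj)
  have H: "(H has_vector_derivative - (H t ** B t) + H t ** a t ** H t - transpose (B t) ** H t)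
      (at t within X)"
    unfolding H_def[abs_def]
    by (rule has_vector_derivative_information[where B = B and a = a, OF L N pos_def_invertible[OF N_pos] t])
  have H_inv: "invertible (H s)" if "s \<in> X" for s
    using H_pos[OF that] by (rule pos_def_invertible)
  have Hd_eq: "Hd s = matrix_inv (H s)" if "s \<in> X" for s
    using Hd[OF that] by (simp add: H_def)
  have derivative:
    "- (Hd t ** (- (H t ** B t) + H t ** a t ** H t - transpose (B t) ** H t) ** Hd t)
      = B t ** Hd t + Hd t ** transpose (B t) - a t"
    using H_inv[OF t] by (intro riccati_conjugation) (simp_all add: Hd_eq[OF t] matrix_inv_left matrix_inv_right)
  have "((\<lambda>s. matrix_inv (H s)) has_vector_derivative
      - (matrix_inv (H t) ** (- (H t ** B t) + H t ** a t ** H t - transpose (B t) ** H t)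
         ** matrix_inv (H t))) (at t within X)"
    using H H_inv t by (rule has_vector_derivative_matrix_inv)
  then have "((\<lambda>s. matrix_inv (H s)) has_vector_derivative B t ** Hd t + Hd t ** transpose (B t) - a t)
      (at t within X)"
    unfolding Hd_eq[OF t, symmetric] derivative .
  with t Hd_eq show ?thesis
    by (rule has_vector_derivative_transform)
qed

section \<open>Two observation times\<close>

locale two_observation_times =
  fixes S T :: real
    and B :: "real \<Rightarrow> real^'d^'d"
    and sigma :: "real \<Rightarrow> real^'d2^'d"
    and a :: "real \<Rightarrow> real^'d^'d"
    and Phi :: "real \<Rightarrow> real^'d^'d"
    and LmS :: "real^'d^'mS" and LmT :: "real^'d^'mT"
    and SigS :: "real^'mS^'mS" and SigT :: "real^'mT^'mT"
  assumes S_pos: "0 < S" and S_less_T: "S < T"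
    and B_cont: "continuous_on {0..T} B" and sigma_cont: "continuous_on {0..T} sigma"
    and a_eq: "\<And>t. a t = sigma t ** transpose (sigma t)"
    and Phi_ode: "\<And>t. t \<in> {0..T} \<Longrightarrow> (Phi has_vector_derivative (B t ** Phi t)) (at t within {0..T})"
    and Phi_0: "Phi 0 = mat 1"
    and SigS_pos: "sym_posdef SigS" and SigT_pos: "sym_posdef SigT"
    and L_stack_inj: "\<And>t x. t \<in> {0..S} \<Longrightarrow> Ltil_stack LmS LmT Phi S T t *v x = 0 \<Longrightarrow> x = 0"
    and LmT_inj: "\<And>x. LmT *v x = 0 \<Longrightarrow> x = 0"
begin

abbreviation "L_last \<equiv> Ltil_last LmT Phi T"
abbreviation "N_last \<equiv> Minv_last LmT Phi a SigT T"
abbreviation "H \<equiv> Htil LmS LmT Phi a SigS SigT S T"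

definition "H_last s = transpose (L_last s) ** matrix_inv (N_last s) ** L_last s"

definition "L_full s = stack_rows (LmS ** trans_mat Phi S s) (LmT ** trans_mat Phi T s)"

text \<open>On \<open>[0, S]\<close> the indicator in \<open>Ltil_stack\<close> is 1, and the part of the integral over \<open>[S, T]\<close>
  merges with \<open>SigT\<close> into \<open>N_last S\<close>.\<close>
definition "N_full s = integral {s..S} (\<lambda>\<tau>. L_full \<tau> ** a \<tau> ** transpose (L_full \<tau>)) + Ups_stack SigS (N_last S)"

lemma S_in: "S \<in> {0..T}"
  using S_pos S_less_T by simp

lemma Phi_invertible: "s \<in> {0..T} \<Longrightarrow> invertible (Phi s)"
  using fundamental_matrix_invertible[OF B_cont Phi_ode Phi_0] by blast

lemma trans_mat_self: "s \<in> {0..T} \<Longrightarrow> C ** trans_mat Phi s s = C"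
  by (simp add: trans_mat_def matrix_inv_right Phi_invertible)

lemma has_vector_derivative_mult_Phi_inv:
  assumes s: "s \<in> {0..T}"
  shows "((\<lambda>s. C ** matrix_inv (Phi s)) has_vector_derivative - (C ** matrix_inv (Phi s) ** B s))
           (at s within {0..T})"
proof -
  have "((\<lambda>s. matrix_inv (Phi s)) has_vector_derivative
      - (matrix_inv (Phi s) ** (B s ** Phi s) ** matrix_inv (Phi s))) (at s within {0..T})"
    using Phi_ode[OF s] Phi_invertible s by (rule has_vector_derivative_matrix_inv)
  moreover have "matrix_inv (Phi s) ** (B s ** Phi s) ** matrix_inv (Phi s) = matrix_inv (Phi s) ** B s"
    using Phi_invertible[OF s] by (simp add: matrix_inv_right flip: matrix_mul_assoc)
  ultimately show ?thesis
    using bounded_linear.has_vector_derivative[OF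
        bounded_bilinear.bounded_linear_right[OF bounded_bilinear_matrix_mult]]
    by (fastforce simp: matrix_mult_linear_simps matrix_mul_assoc)
qed

lemma L_last_derivative:
  "s \<in> {0..T} \<Longrightarrow> (L_last has_vector_derivative - (L_last s ** B s)) (at s within {0..T})"
  using has_vector_derivative_mult_Phi_inv[of s "LmT ** Phi T"]
  by (simp add: Ltil_last_def[abs_def] trans_mat_def matrix_mul_assoc)

lemma L_full_derivative:
  "s \<in> {0..T} \<Longrightarrow> (L_full has_vector_derivative - (L_full s ** B s)) (at s within {0..T})"
  using has_vector_derivative_mult_Phi_inv[of s "stack_rows (LmS ** Phi S) (LmT ** Phi T)"]
  by (simp add: L_full_def[abs_def] trans_mat_def stack_rows_mult matrix_mul_assoc)

lemma continuous_on_gram: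
  assumes "\<And>s. s \<in> {0..T} \<Longrightarrow> (L has_vector_derivative - (L s ** B s)) (at s within {0..T})"
  shows "continuous_on {0..T} (\<lambda>s. L s ** a s ** transpose (L s))"
proof -
  have L: "continuous_on {0..T} L"
    using assms has_vector_derivative_continuous continuous_on_eq_continuous_within by blast
  have "continuous_on {0..T} a"
    unfolding a_eq[abs_def]
    by (intro bounded_bilinear.continuous_on[OF bounded_bilinear_matrix_mult] sigma_cont
        bounded_linear.continuous_on[OF bounded_linear_transpose])
  with L show ?thesis
    by (intro bounded_bilinear.continuous_on[OF bounded_bilinear_matrix_mult]
        bounded_linear.continuous_on[OF bounded_linear_transpose])
qed

lemma pos_semidef_a_congruence: "pos_semidef (L ** a s ** transpose L)"
  using pos_semidef_gram[of "L ** sigma s"]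
  by (simp add: a_eq matrix_transpose_mul matrix_mul_assoc)

lemma integral_gram_pos_semidef:
  assumes "\<And>s. s \<in> {0..T} \<Longrightarrow> (L has_vector_derivative - (L s ** B s)) (at s within {0..T})"
    and "0 \<le> s" "s \<le> u" "u \<le> T"
  shows "pos_semidef (integral {s..u} (\<lambda>\<tau>. L \<tau> ** a \<tau> ** transpose (L \<tau>)))"
  using assms
  by (intro pos_semidef_integral pos_semidef_a_congruence integrable_continuous_interval
      continuous_on_subset[OF continuous_on_gram]) auto

lemma N_last_derivative:
  "s \<in> {0..T} \<Longrightarrow> (N_last has_vector_derivative - (L_last s ** a s ** transpose (L_last s)))
    (at s within {0..T})"
  unfolding Minv_last_def[abs_def]
  by (rule has_vector_derivative_eq_rhs, rule has_vector_derivative_add[OF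
        integral_has_vector_derivative'[OF continuous_on_gram[OF L_last_derivative]]
        has_vector_derivative_const]) auto

lemma N_last_pos_def: "s \<in> {0..T} \<Longrightarrow> pos_def (N_last s)"
  unfolding Minv_last_def
  by (subst add.commute, intro pos_def_add_pos_semidef sym_posdef_imp_pos_def SigT_pos
      integral_gram_pos_semidef[OF L_last_derivative]) auto

lemma N_full_derivative:
  assumes "s \<in> {0..S}"
  shows "(N_full has_vector_derivative - (L_full s ** a s ** transpose (L_full s))) (at s within {0..S})"
proof -
  have "continuous_on {0..S} (\<lambda>s. L_full s ** a s ** transpose (L_full s))"
    using continuous_on_subset[OF continuous_on_gram[OF L_full_derivative]] S_less_T by auto
  from integral_has_vector_derivative'[OF this assms]
  show ?thesis
    unfolding N_full_def[abs_def]
    by (rule has_vector_derivative_eq_rhs[OF has_vector_derivative_add[OF _ has_vector_derivative_const]])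
      simp
qed

lemma N_full_pos_def: "s \<in> {0..S} \<Longrightarrow> pos_def (N_full s)"
  unfolding N_full_def using S_in
  by (subst add.commute, intro pos_def_add_pos_semidef pos_def_Ups_stack sym_posdef_imp_pos_def SigS_pos
      N_last_pos_def integral_gram_pos_semidef[OF L_full_derivative]) auto

lemma Ltil_stack_before_S: "s \<in> {0..S} \<Longrightarrow> Ltil_stack LmS LmT Phi S T s = L_full s"
  by (auto simp: Ltil_stack_def L_full_def stack_rows_def vec_eq_iff split: sum.split)

lemma Ltil_stack_after_S: "S < s \<Longrightarrow> Ltil_stack LmS LmT Phi S T s = stack_rows 0 (L_last s)"
  by (auto simp: Ltil_stack_def Ltil_last_def stack_rows_def vec_eq_iff split: sum.split)

lemma Minv_stack_eq_N_full:
  assumes s: "s \<in> {0..S}"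
  shows "Minv_stack LmS LmT Phi a SigS SigT S T s = N_full s"
proof -
  define G where "G \<tau> = Ltil_stack LmS LmT Phi S T \<tau> ** a \<tau> ** transpose (Ltil_stack LmS LmT Phi S T \<tau>)"
    for \<tau>
  define G_full where "G_full \<tau> = L_full \<tau> ** a \<tau> ** transpose (L_full \<tau>)" for \<tau>
  define G_last where "G_last \<tau> = L_last \<tau> ** a \<tau> ** transpose (L_last \<tau>)" for \<tau>
  have before: "G \<tau> = G_full \<tau>" if "\<tau> \<in> {s..S}" for \<tau>
    using that s by (simp add: G_def G_full_def Ltil_stack_before_S)
  have after: "G \<tau> = Ups_stack 0 (G_last \<tau>)" if "\<tau> \<in> {S..T} - {S}" for \<tau>
    using that by (simp add: G_def G_last_def Ltil_stack_after_S stack_rows_zero_congruence)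
  have G_full_int: "G_full integrable_on {s..S}"
    unfolding G_full_def using s S_less_T
    by (intro integrable_continuous_interval
        continuous_on_subset[OF continuous_on_gram[OF L_full_derivative]]) auto
  have G_last_int: "G_last integrable_on {S..T}"
    unfolding G_last_def using S_in
    by (intro integrable_continuous_interval
        continuous_on_subset[OF continuous_on_gram[OF L_last_derivative]]) auto
  have "G integrable_on {s..S}"
    using G_full_int by (rule integrable_eq) (simp add: before)
  moreover have "G integrable_on {S..T}"
    using integrable_linear[OF G_last_int bounded_linear_Ups_stack_zero]
    by (intro integrable_spike_finite[where S = "{S}", OF _ after]) (simp_all add: o_def)
  ultimately have "integral {s..T} G = integral {s..S} G + integral {S..T} G"
    using Henstock_Kurzweil_Integration.integral_combine[of s S T G]
      Henstock_Kurzweil_Integration.integrable_combine[of s S T G] s S_less_T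
    by auto
  also have "integral {s..S} G = integral {s..S} G_full"
    using before by (rule integral_cong)
  also have "integral {S..T} G = integral {S..T} (\<lambda>\<tau>. Ups_stack 0 (G_last \<tau>))"
    by (rule integral_spike[of "{S}"]) (simp_all add: after)
  also have "\<dots> = Ups_stack 0 (integral {S..T} G_last)"
    using integral_linear[OF G_last_int bounded_linear_Ups_stack_zero] by (simp add: o_def)
  finally show ?thesis
    unfolding Minv_stack_def N_full_def Minv_last_def G_def[symmetric]
    by (simp add: G_full_def[abs_def] G_last_def[abs_def] Ups_stack_add add.assoc)
qed

lemma L_last_inj:
  assumes s: "s \<in> {0..T}" and x: "L_last s *v x = 0"
  shows "x = 0"
proof -
  have "invertible (Phi T ** matrix_inv (Phi s))"
    using s S_less_T by (intro invertible_mult invertible_matrix_inv Phi_invertible) auto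
  moreover have "LmT *v ((Phi T ** matrix_inv (Phi s)) *v x) = 0"
    using x by (simp add: Ltil_last_def trans_mat_def matrix_vector_mul_assoc matrix_mul_assoc)
  ultimately show "x = 0"
    using LmT_inj inj_matrix_vector_mult unfolding inj_on_def
    by (metis matrix_vector_mult_0_right UNIV_I)
qed

lemma L_full_inj: "s \<in> {0..S} \<Longrightarrow> L_full s *v x = 0 \<Longrightarrow> x = 0"
  using L_stack_inj Ltil_stack_before_S by metis

lemma H_last_pos_def: "s \<in> {0..T} \<Longrightarrow> pos_def (H_last s)"
  unfolding H_last_def by (intro pos_def_congruence pos_def_matrix_inv N_last_pos_def L_last_inj)

lemma H_after_S: "S < s \<Longrightarrow> H s = H_last s"
  by (simp add: Htil_def H_last_def)

lemma H_before_S: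
  "s \<in> {0..S} \<Longrightarrow> H s = transpose (L_full s) ** matrix_inv (N_full s) ** L_full s"
  by (simp add: Htil_def Ltil_stack_before_S Minv_stack_eq_N_full)

lemma Hdag_riccati_after_S:
  assumes t: "t \<in> {S<..T}"
  shows "((\<lambda>s. matrix_inv (H s)) has_vector_derivative
           (B t ** matrix_inv (H t) + matrix_inv (H t) ** transpose (B t) - a t)) (at t within {S<..T})"
proof (rule riccati_inverse_information[where L = L_last and N = N_last])
  have "t \<in> {0..T}" "{S<..T} \<subseteq> {0..T}"
    using t S_pos by auto
  then show "(L_last has_vector_derivative - (L_last t ** B t)) (at t within {S<..T})"
    and "(N_last has_vector_derivative - (L_last t ** a t ** transpose (L_last t))) (at t within {S<..T})"
    using has_vector_derivative_within_subset L_last_derivative N_last_derivative by blast+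
  show "pos_def (N_last s)" if "s \<in> {S<..T}" for s
    using that S_pos by (intro N_last_pos_def) auto
  show "x = 0" if "s \<in> {S<..T}" "L_last s *v x = 0" for s x
    using that S_pos by (intro L_last_inj[of s]) auto
  show "matrix_inv (H s) = matrix_inv (transpose (L_last s) ** matrix_inv (N_last s) ** L_last s)"
    if "s \<in> {S<..T}" for s
    using that by (simp add: H_after_S H_last_def)
qed (rule t)

lemma Hdag_riccati_before_S:
  assumes t: "t \<in> {0..S}"
  shows "((\<lambda>s. matrix_inv (H s)) has_vector_derivative
           (B t ** matrix_inv (H t) + matrix_inv (H t) ** transpose (B t) - a t)) (at t within {0..S})"
proof (rule riccati_inverse_information[where L = L_full and N = N_full])
  have "t \<in> {0..T}" "{0..S} \<subseteq> {0..T}"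
    using t S_less_T by auto
  then show "(L_full has_vector_derivative - (L_full t ** B t)) (at t within {0..S})"
    using has_vector_derivative_within_subset L_full_derivative by blast
  show "(N_full has_vector_derivative - (L_full t ** a t ** transpose (L_full t))) (at t within {0..S})"
    using t by (rule N_full_derivative)
  show "pos_def (N_full s)" if "s \<in> {0..S}" for s
    using that by (rule N_full_pos_def)
  show "x = 0" if "s \<in> {0..S}" "L_full s *v x = 0" for s x
    using that by (rule L_full_inj)
  show "matrix_inv (H s) = matrix_inv (transpose (L_full s) ** matrix_inv (N_full s) ** L_full s)"
    if "s \<in> {0..S}" for s
    using that by (simp add: H_before_S)
qed (rule t)

lemma Hdag_T: "matrix_inv (H T) = matrix_inv (transpose LmT ** matrix_inv SigT ** LmT)"
  using S_less_T trans_mat_self[of T LmT] S_pos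
  by (simp add: H_after_S H_last_def Ltil_last_def Minv_last_def)

lemma H_at_S: "H S = transpose LmS ** matrix_inv SigS ** LmS + H_last S"
proof -
  have "L_full S = stack_rows LmS (L_last S)"
    by (simp add: L_full_def Ltil_last_def trans_mat_self[OF S_in])
  moreover have "N_full S = Ups_stack SigS (N_last S)"
    by (simp add: N_full_def)
  moreover have "invertible SigS" "invertible (N_last S)"
    using pos_def_invertible sym_posdef_imp_pos_def[OF SigS_pos] N_last_pos_def[OF S_in] by blast+
  ultimately show ?thesis
    using S_in by (simp add: H_before_S matrix_inv_Ups_stack stack_rows_congruence H_last_def)
qed

lemma Hdag_right_limit_at_S: "((\<lambda>s. matrix_inv (H s)) \<longlongrightarrow> matrix_inv (H_last S)) (at_right S)"
proof -
  have S: "S \<in> {S..T}" and sub: "{S..T} \<subseteq> {0..T}"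
    using S_less_T S_pos by auto
  have "continuous (at S within {S..T}) L_last" "continuous (at S within {S..T}) N_last"
    using has_vector_derivative_continuous has_vector_derivative_within_subset[OF _ sub]
      L_last_derivative N_last_derivative S_in by blast+
  then have "continuous (at S within {S..T}) H_last"
    unfolding H_last_def[abs_def] using S sub
    by (intro bounded_bilinear.continuous[OF bounded_bilinear_matrix_mult]
        bounded_linear.continuous[OF bounded_linear_transpose] continuous_matrix_inv
        pos_def_invertible N_last_pos_def) auto
  then have "continuous (at S within {S..T}) (\<lambda>s. matrix_inv (H_last s))"
    using S sub by (intro continuous_matrix_inv pos_def_invertible H_last_pos_def) auto
  then have "((\<lambda>s. matrix_inv (H_last s)) \<longlongrightarrow> matrix_inv (H_last S)) (at_right S)"
    using at_within_Icc_at_right[OF S_less_T] by (simp add: continuous_within)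
  moreover have "\<forall>\<^sub>F s in at_right S. matrix_inv (H_last s) = matrix_inv (H s)"
    using eventually_at_right_less[of S] by eventually_elim (simp add: H_after_S)
  ultimately show ?thesis
    by (rule Lim_transform_eventually)
qed

lemma Hdag_jump_at_S:
  defines "Hp \<equiv> matrix_inv (H_last S)"
  shows "matrix_inv (H S)
    = Hp - Hp ** transpose LmS ** matrix_inv (SigS + LmS ** Hp ** transpose LmS) ** LmS ** Hp"
proof -
  have SigS: "pos_def SigS"
    using SigS_pos by (rule sym_posdef_imp_pos_def)
  have H_last: "pos_def (H_last S)"
    using S_in by (rule H_last_pos_def)
  have "pos_semidef (LmS ** Hp ** transpose LmS)"
    using pos_semidef_congruence[OF pos_def_imp_pos_semidef[OF pos_def_matrix_inv[OF H_last]],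
        of "transpose LmS"]
    by (simp add: Hp_def)
  with SigS have "pos_def (SigS + LmS ** Hp ** transpose LmS)"
    by (rule pos_def_add_pos_semidef)
  then show ?thesis
    unfolding H_at_S Hp_def
    using SigS H_last by (intro woodbury_identity pos_def_invertible)
qed

end

theorem lemma2:
  fixes S T :: real
    and beta :: "real \<Rightarrow> real^'d"
    and B :: "real \<Rightarrow> real^'d^'d"
    and sigma :: "real \<Rightarrow> real^'d2^'d"
    and a :: "real \<Rightarrow> real^'d^'d"
    and Phi :: "real \<Rightarrow> real^'d^'d"
    and LmS :: "real^'d^'mS" and LmT :: "real^'d^'mT"
    and SigS :: "real^'mS^'mS" and SigT :: "real^'mT^'mT"
    and Hdag :: "real \<Rightarrow> real^'d^'d"
  assumes ST: "0 < S" "S < T"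
    and cont: "continuous_on {0..T} beta" "continuous_on {0..T} B" "continuous_on {0..T} sigma"
    and a_def: "\<And>t. a t = sigma t ** transpose (sigma t)"
    and Phi_ode: "\<And>t. t \<in> {0..T} \<Longrightarrow> (Phi has_vector_derivative (B t ** Phi t)) (at t within {0..T})"
    and Phi0: "Phi 0 = mat 1"
    and SigS: "sym_posdef SigS" and SigT: "sym_posdef SigT"
    and M1: "\<And>t. t \<in> {0..S} \<Longrightarrow> invertible (Minv_stack LmS LmT Phi a SigS SigT S T t)"
    and M2: "\<And>t. t \<in> {S<..T} \<Longrightarrow> invertible (Minv_last LmT Phi a SigT T t)"
    and N1: "\<And>t x. t \<in> {0..S} \<Longrightarrow> Ltil_stack LmS LmT Phi S T t *v x = 0 \<Longrightarrow> x = 0"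
    and N2: "\<And>t x. t \<in> {S<..T} \<Longrightarrow> Ltil_last LmT Phi T t *v x = 0 \<Longrightarrow> x = 0"
    and Hdag_def: "\<And>t. Hdag t = matrix_inv (Htil LmS LmT Phi a SigS SigT S T t)"
  shows "(\<forall>t \<in> {S<..T}. (Hdag has_vector_derivative
             (B t ** Hdag t + Hdag t ** transpose (B t) - a t)) (at t within {S<..T}))
       \<and> Hdag T = matrix_inv (transpose LmT ** matrix_inv SigT ** LmT)
       \<and> (\<forall>t \<in> {0..S}. (Hdag has_vector_derivative
             (B t ** Hdag t + Hdag t ** transpose (B t) - a t)) (at t within {0..S}))
       \<and> (\<exists>Hp. (Hdag \<longlongrightarrow> Hp) (at_right S)
             \<and> Hdag S = Hp - Hp ** transpose LmS ** matrix_inv (SigS + LmS ** Hp ** transpose LmS) ** LmS ** Hp)"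
proof -
  have "invertible (Phi T)"
    using fundamental_matrix_invertible[OF cont(2) Phi_ode Phi0] ST by auto
  then have "Ltil_last LmT Phi T T = LmT"
    by (simp add: Ltil_last_def trans_mat_def matrix_inv_right)
  then have LmT_inj: "LmT *v x = 0 \<Longrightarrow> x = 0" for x
    using N2[of T x] ST by auto
  interpret two_observation_times S T B sigma a Phi LmS LmT SigS SigT
    using ST cont(2,3) a_def Phi_ode Phi0 SigS SigT N1 LmT_inj by unfold_locales auto
  have "Hdag = (\<lambda>t. matrix_inv (Htil LmS LmT Phi a SigS SigT S T t))"
    using Hdag_def by (simp add: fun_eq_iff)
  then show ?thesis
    using Hdag_riccati_after_S Hdag_T Hdag_riccati_before_S Hdag_right_limit_at_S Hdag_jump_at_S
    by blast
qed

end
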